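(* Let $\beta$ be complex with $\Re(\beta)>0$ and let $a,c$ be real numbers such that $c-a(a+t)>0$, $c-(a+1)(a+t)>0$ and $c-(a+t)^2>0$ for all $t\in[0,1]$. Then \[ \frac{\Gamma(\beta)\Gamma(\beta)}{\Gamma(2\beta)}=(c-(a+1)^2)\int_0^1\frac{(c-a(a+t))^{\beta-1}\,(c-(a+1)(a+t))^{\beta-1}}{(c-(a+t)^2)^{2\beta}}\,(c-(a-t)(a+t))\,t^{\beta-1}(1-t)^{\beta-1}\,dt . \]
   Context: Powers of positive reals are principal powers. *)

theory Defs
  imports "HOL-Analysis.Analysis"
begin

end

(*
  Write A, B, C, D for the factors c - a(a+t), c - (a+1)(a+t), c - (a+t)^2, c - (a-t)(a+t)
  of the integrand and K = c - (a+1)^2. For real x > 0 the substitution s = S t = t B / C,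
  with 1 - S = (1-t) A / C, turns the symmetric Beta kernel (s (1-s))^(x-1) into
  (t (1-t) A B)^(x-1) / C^(2x-2), and K D / C^2 = S' - (a+1) (1 - 2S) / C. The S' part
  integrates to Beta x x; the other part vanishes because a Moebius reparametrisation sigma of
  [0,1] with S (sigma t) = 1 - S (1 - t) carries it to its negative. Both sides are holomorphic
  in beta on Re beta > 0 (the integral as a locally uniform limit of integrals over compact
  subintervals, dominated by the real integrand at a smaller exponent), so the identity for real
  beta extends by analytic continuation.
*)
theory Submission
  imports Defs "HOL-Complex_Analysis.Complex_Analysis"
begin

lemma has_integral_substitution_nonneg_deriv:
  fixes f :: "real \<Rightarrow> real"
  assumes "set_integrable lborel {g a..g b} f"
    and "\<And>x. x \<in> {a..b} \<Longrightarrow> (g has_real_derivative g' x) (at x)"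
    and "continuous_on {a..b} g'"
    and "\<And>x. x \<in> {a..b} \<Longrightarrow> g' x \<ge> 0"
    and "a \<le> b"
  shows "set_integrable lborel {a..b} (\<lambda>x. f (g x) * g' x)"
    and "((\<lambda>x. f (g x) * g' x) has_integral integral {g a..g b} f) {a..b}"
proof -
  note subst = integral_substitution[OF assms]
  show int: "set_integrable lborel {a..b} (\<lambda>x. f (g x) * g' x)"
    using subst(1) .
  have "integral {a..b} (\<lambda>x. f (g x) * g' x) = integral {g a..g b} f"
    using subst(2) set_borel_integral_eq_integral(2)[OF int]
      set_borel_integral_eq_integral(2)[OF assms(1)]
    by (simp add: set_lebesgue_integral_def mult.commute)
  then show "((\<lambda>x. f (g x) * g' x) has_integral integral {g a..g b} f) {a..b}"
    using set_borel_integral_eq_integral(1)[OF int] by (metis has_integral_integral)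
qed

lemma set_integrable_mult_continuous:
  fixes f w :: "real \<Rightarrow> real"
  assumes "set_integrable lborel {a..b} f" "continuous_on {a..b} w"
  shows "set_integrable lborel {a..b} (\<lambda>t. w t * f t)"
proof -
  obtain M where M: "\<And>t. t \<in> {a..b} \<Longrightarrow> \<bar>w t\<bar> \<le> M"
    using compact_continuous_image[OF assms(2) compact_Icc]
    by (metis bounded_iff compact_imp_bounded imageI real_norm_def)
  show ?thesis
  proof (rule set_integrable_bound)
    show "set_integrable lborel {a..b} (\<lambda>t. M * f t)"
      using assms(1) by simp
    have "(\<lambda>t. indicator {a..b} t *\<^sub>R (w t * f t))
        = (\<lambda>t. (indicator {a..b} t *\<^sub>R w t) * (indicator {a..b} t *\<^sub>R f t))"
      by (auto simp: indicator_def)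
    then show "set_borel_measurable lborel {a..b} (\<lambda>t. w t * f t)"
      using set_measurable_continuous_on[OF _ assms(2)] assms(1)
      by (auto simp: set_borel_measurable_def set_integrable_def
          intro!: borel_measurable_times)
    have "\<bar>w t\<bar> \<le> \<bar>M\<bar>" if "t \<in> {a..b}" for t
      using M[OF that] by linarith
    then show "AE t in lborel. t \<in> {a..b} \<longrightarrow> norm (w t * f t) \<le> norm (M * f t)"
      by (intro AE_I2 impI) (simp add: abs_mult mult_right_mono)
  qed
qed

lemma integral_reflect_Icc:
  fixes f :: "real \<Rightarrow> 'a::banach"
  shows "integral {a..b} (\<lambda>t. f (a + b - t)) = integral {a..b} f"
proof -
  have "integral {a..b} (\<lambda>t. f (a + b - t)) = integral {-b..-a} (\<lambda>t. f (a + b + t))"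
    using Henstock_Kurzweil_Integration.integral_reflect_real[of "-a" "-b" "\<lambda>t. f (a + b + t)"]
    by simp
  also have "\<dots> = integral {-b + (a + b)..-a + (a + b)} f"
    using integral_shift_Icc_real[of "-b" "-a" f "a + b"] by (simp add: o_def add.commute)
  finally show ?thesis by simp
qed

lemma holomorphic_on_integral_mult_exp:
  fixes p q :: "real \<Rightarrow> complex"
  assumes "continuous_on {u..v} p" "continuous_on {u..v} q"
  shows "(\<lambda>z. integral {u..v} (\<lambda>t. p t * exp (z * q t))) holomorphic_on UNIV"
proof -
  have cont: "continuous_on (UNIV \<times> {u..v}) (\<lambda>x. h (snd x))"
    if "continuous_on {u..v} h" for h :: "real \<Rightarrow> complex"
    by (rule continuous_on_compose2[OF that continuous_on_snd]) auto
  have "(\<lambda>z. integral (cbox u v) (\<lambda>t. p t * exp (z * q t))) holomorphic_on UNIV"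
  proof (rule leibniz_rule_holomorphic)
    show "((\<lambda>z. p t * exp (z * q t)) has_field_derivative p t * exp (z * q t) * q t)
        (at z within UNIV)" for z t
      by (auto intro!: derivative_eq_intros)
    show "(\<lambda>t. p t * exp (z * q t)) integrable_on cbox u v" for z
      using assms by (auto intro!: integrable_continuous_interval continuous_intros)
    show "continuous_on (UNIV \<times> cbox u v) (\<lambda>(z, t). p t * exp (z * q t) * q t)"
      using cont[OF assms(1)] cont[OF assms(2)]
      by (auto simp: split_beta intro!: continuous_intros)
  qed auto
  then show ?thesis by simp
qed

lemma norm_integral_diff_subinterval_le:
  fixes f :: "real \<Rightarrow> 'a::banach"
  assumes f: "f integrable_on {a..b}" and g: "g integrable_on {a..b}"
    and le: "\<And>t. t \<in> {a..b} \<Longrightarrow> norm (f t) \<le> g t"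
    and "a \<le> u" "u \<le> v" "v \<le> b"
  shows "norm (integral {a..b} f - integral {u..v} f) \<le> integral {a..b} g - integral {u..v} g"
proof -
  have split: "integral {a..b} h - integral {u..v} h = integral {a..u} h + integral {v..b} h"
    if "h integrable_on {a..b}" for h :: "real \<Rightarrow> 'b::banach"
  proof -
    have hub: "h integrable_on {u..b}"
      using that integrable_on_subinterval assms(4-6) by fastforce
    have "integral {u..b} h = integral {u..v} h + integral {v..b} h"
      using Henstock_Kurzweil_Integration.integral_combine[OF \<open>u \<le> v\<close> \<open>v \<le> b\<close> hub] by simp
    moreover have "integral {a..b} h = integral {a..u} h + integral {u..b} h"
      using Henstock_Kurzweil_Integration.integral_combine[OF \<open>a \<le> u\<close> _ that] assms(5,6) by simp
    ultimately show ?thesis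
      by simp
  qed
  have bound: "norm (integral {x..y} f) \<le> integral {x..y} g" if "{x..y} \<subseteq> {a..b}" for x y
    using that le by (intro integral_norm_bound_integral integrable_on_subinterval[OF f]
        integrable_on_subinterval[OF g]) auto
  have "norm (integral {a..u} f + integral {v..b} f) \<le> integral {a..u} g + integral {v..b} g"
    using norm_triangle_le[OF add_mono[OF bound bound]] assms(4-6) by auto
  then show ?thesis
    unfolding split[OF f] split[OF g] .
qed

lemma tendsto_integral_shrinking_Icc:
  fixes g :: "real \<Rightarrow> 'a::banach"
  assumes g: "g integrable_on {a..b}" and "a < b"
  shows "((\<lambda>d. integral {a + d..b - d} g) \<longlongrightarrow> integral {a..b} g) (at_right 0)"
proof -
  define J where "J x = integral {a..x} g" for x
  have J: "continuous_on {a..b} J"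
    unfolding J_def by (rule indefinite_integral_continuous_1[OF g])
  have small: "\<forall>\<^sub>F d in at_right 0. 0 < d \<and> d < (b - a) / 2"
    using \<open>a < b\<close> by (auto simp: eventually_at_right_field intro: exI[of _ "(b - a) / 2"])
  have "((\<lambda>d. J (b - d) - J (a + d)) \<longlongrightarrow> J b - J a) (at_right 0)"
  proof (intro tendsto_diff continuous_on_tendsto_compose[OF J])
    show "((\<lambda>d. b - d) \<longlongrightarrow> b) (at_right 0)" "((\<lambda>d. a + d) \<longlongrightarrow> a) (at_right 0)"
      by (auto intro!: tendsto_eq_intros tendsto_ident_at)
    show "\<forall>\<^sub>F d in at_right 0. b - d \<in> {a..b}" "\<forall>\<^sub>F d in at_right 0. a + d \<in> {a..b}"
      using small by (eventually_elim, auto)+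
  qed (use \<open>a < b\<close> in auto)
  moreover have "\<forall>\<^sub>F d in at_right 0. J (b - d) - J (a + d) = integral {a + d..b - d} g"
  proof (rule eventually_mono[OF small])
    fix d assume "0 < d \<and> d < (b - a) / 2"
    then show "J (b - d) - J (a + d) = integral {a + d..b - d} g"
      unfolding J_def using Henstock_Kurzweil_Integration.integral_combine[of a "a + d" "b - d" g]
        integrable_on_subinterval[OF g, of a "b - d"]
      by (simp add: algebra_simps)
  qed
  ultimately show ?thesis
    by (simp add: J_def Lim_transform_eventually)
qed

lemma holomorphic_on_integral_dominated:
  fixes f :: "complex \<Rightarrow> real \<Rightarrow> complex"
  assumes "a < b"
    and inner: "\<And>u v. a < u \<Longrightarrow> v < b \<Longrightarrow> (\<lambda>z. integral {u..v} (f z)) holomorphic_on S"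
    and int: "\<And>z. z \<in> S \<Longrightarrow> f z integrable_on {a..b}"
    and dom: "\<And>z. z \<in> S \<Longrightarrow> \<exists>r>0. cball z r \<subseteq> S \<and>
                 (\<exists>g. g integrable_on {a..b} \<and> (\<forall>w\<in>cball z r. \<forall>t\<in>{a..b}. norm (f w t) \<le> g t))"
  shows "(\<lambda>z. integral {a..b} (f z)) holomorphic_on S"
proof -
  have "(\<lambda>z. integral {a..b} (f z)) field_differentiable at z" if "z \<in> S" for z
  proof -
    obtain r g where r: "r > 0" "cball z r \<subseteq> S" and g: "g integrable_on {a..b}"
      and bound: "\<And>w t. w \<in> cball z r \<Longrightarrow> t \<in> {a..b} \<Longrightarrow> norm (f w t) \<le> g t"
      using dom[OF \<open>z \<in> S\<close>] by blast
    define trunc where "trunc d w = integral {a + d..b - d} (f w)" for d w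
    have small: "\<forall>\<^sub>F d in at_right 0. 0 < d \<and> d < (b - a) / 2"
      using \<open>a < b\<close> by (auto simp: eventually_at_right_field intro: exI[of _ "(b - a) / 2"])
    have "uniform_limit (cball z r) trunc (\<lambda>w. integral {a..b} (f w)) (at_right 0)"
    proof (rule uniform_limitI)
      fix e :: real assume "e > 0"
      have "\<forall>\<^sub>F d in at_right 0. integral {a..b} g - e < integral {a + d..b - d} g"
        using order_tendstoD(1)[OF tendsto_integral_shrinking_Icc[OF g \<open>a < b\<close>]] \<open>e > 0\<close> by simp
      with small show "\<forall>\<^sub>F d in at_right 0. \<forall>w\<in>cball z r. dist (trunc d w) (integral {a..b} (f w)) < e"
      proof eventually_elim
        case (elim d)
        show ?case
        proof
          fix w assume w: "w \<in> cball z r"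
          have "dist (trunc d w) (integral {a..b} (f w)) = norm (integral {a..b} (f w) - trunc d w)"
            by (simp add: dist_norm norm_minus_commute)
          also have "\<dots> \<le> integral {a..b} g - integral {a + d..b - d} g"
            unfolding trunc_def using elim w r(2)
            by (intro norm_integral_diff_subinterval_le int g bound) auto
          finally show "dist (trunc d w) (integral {a..b} (f w)) < e"
            using elim by simp
        qed
      qed
    qed
    moreover have "\<forall>\<^sub>F d in at_right 0. continuous_on (cball z r) (trunc d) \<and> trunc d holomorphic_on ball z r"
      using small
    proof eventually_elim
      case (elim d)
      then have "trunc d holomorphic_on S"
        unfolding trunc_def by (intro inner) auto
      then show ?case
        using r(2) ball_subset_cball
        by (meson holomorphic_on_imp_continuous_on holomorphic_on_subset subset_trans)
    qed
    ultimately obtain "(\<lambda>w. integral {a..b} (f w)) holomorphic_on ball z r"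
      using holomorphic_uniform_limit trivial_limit_at_right_real by blast
    then show ?thesis
      using holomorphic_on_imp_differentiable_at r(1) by auto
  qed
  then show ?thesis
    by (simp add: holomorphic_on_def field_differentiable_at_within)
qed


definition beta_kernel :: "real \<Rightarrow> real \<Rightarrow> real" where
  "beta_kernel x s = s powr (x - 1) * (1 - s) powr (x - 1)"

lemma beta_kernel_reflect: "beta_kernel x (1 - s) = beta_kernel x s"
  by (simp add: beta_kernel_def mult.commute)

lemma beta_kernel_antimono:
  assumes "0 \<le> s" "s \<le> 1" "x0 \<le> x"
  shows "beta_kernel x s \<le> beta_kernel x0 s"
proof -
  have "0 \<le> s * (1 - s)" "s * (1 - s) \<le> 1"
    using assms by (auto intro: mult_le_one)
  then show ?thesis
    unfolding beta_kernel_def powr_mult[symmetric] using assms by (intro powr_mono') auto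
qed

lemma beta_kernel_integrable: "x > 0 \<Longrightarrow> set_integrable lborel {0..1} (beta_kernel x)"
  unfolding beta_kernel_def[abs_def] by (rule integrable_Beta)

lemma has_integral_beta_kernel: "x > 0 \<Longrightarrow> (beta_kernel x has_integral Beta x x) {0..1}"
  unfolding beta_kernel_def[abs_def] by (rule has_integral_Beta_real)

lemma convex_combination_pos:
  fixes t X Y :: real
  assumes "0 \<le> t" "t \<le> 1" "0 < X" "0 < Y"
  shows "0 < (1 - t) * X + t * Y"
  using assms by (cases "t < 1") (auto intro: add_pos_nonneg add_nonneg_pos)

locale quadratic_beta =
  fixes a c :: real
  assumes a_sq_less: "a^2 < c" and a1_sq_less: "(a + 1)^2 < c"
begin

definition "A t = c - a * (a + t)"
definition "B t = c - (a + 1) * (a + t)"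
definition "C t = c - (a + t)^2"
definition "D t = c - (a - t) * (a + t)"
definition "K = c - (a + 1)^2"

lemma K_pos: "K > 0"
  using a1_sq_less by (simp add: K_def)

lemma a_mult_a1_less: "a * (a + 1) < c"
proof -
  have "c - a * (a + 1) = ((c - a^2) + K + 1) / 2"
    by (simp add: K_def power2_eq_square algebra_simps)
  also have "\<dots> > 0"
    using a_sq_less K_pos by simp
  finally show ?thesis
    by simp
qed

lemma c_plus_a_mult_a1_pos: "c + a * (a + 1) > 0"
proof -
  have "c + a * (a + 1) = ((c - a^2) + K) / 2 + 2 * (a + 1/2)^2"
    by (simp add: K_def power2_eq_square field_simps)
  also have "\<dots> > 0"
    using a_sq_less K_pos by (intro add_pos_nonneg) auto
  finally show ?thesis .
qed

lemma A_pos: "t \<in> {0..1} \<Longrightarrow> A t > 0"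
proof -
  have "A t = (1 - t) * (c - a^2) + t * (c - a * (a + 1))"
    by (simp add: A_def power2_eq_square algebra_simps)
  then show "t \<in> {0..1} \<Longrightarrow> A t > 0"
    using convex_combination_pos a_sq_less a_mult_a1_less by simp
qed

lemma B_pos: "t \<in> {0..1} \<Longrightarrow> B t > 0"
proof -
  have "B t = (1 - t) * (c - a * (a + 1)) + t * K"
    by (simp add: B_def K_def power2_eq_square algebra_simps)
  then show "t \<in> {0..1} \<Longrightarrow> B t > 0"
    using convex_combination_pos a_mult_a1_less K_pos by simp
qed

lemma C_pos: "t \<in> {0..1} \<Longrightarrow> C t > 0"
proof -
  have "C t = ((1 - t) * (c - a^2) + t * K) + t * (1 - t)"
    by (simp add: C_def K_def power2_eq_square algebra_simps)
  then show "t \<in> {0..1} \<Longrightarrow> C t > 0"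
    using convex_combination_pos[of t "c - a^2" K] a_sq_less K_pos
    by (smt (verit) atLeastAtMost_iff mult_nonneg_nonneg)
qed

lemma D_pos: "D t > 0"
proof -
  have "D t = (c - a^2) + t^2"
    by (simp add: D_def power2_eq_square algebra_simps)
  then show ?thesis
    using a_sq_less by (simp add: add_pos_nonneg)
qed

definition "S t = t * B t / C t"
definition "S' t =
  ((c + a * (a + 1)) * (c + (a + t)^2) - 2 * (2 * a + 1) * c * (a + t)) / C t ^ 2"

lemma S_0: "S 0 = 0"
  by (simp add: S_def)

lemma S_1: "S 1 = 1"
proof -
  have "B 1 = C 1"
    by (simp add: B_def C_def power2_eq_square)
  then show ?thesis
    using C_pos[of 1] by (simp add: S_def)
qed

lemma one_minus_S: "t \<in> {0..1} \<Longrightarrow> 1 - S t = (1 - t) * A t / C t"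
proof -
  assume "t \<in> {0..1}"
  then have "C t \<noteq> 0"
    using C_pos by force
  moreover have "C t - t * B t = (1 - t) * A t"
    unfolding A_def B_def C_def by algebra
  ultimately show ?thesis
    by (simp add: S_def field_simps)
qed

lemma S_nonneg: "t \<in> {0..1} \<Longrightarrow> 0 \<le> S t"
  unfolding S_def using B_pos[of t] C_pos[of t] by simp

lemma S_le_1: "t \<in> {0..1} \<Longrightarrow> S t \<le> 1"
proof -
  assume t: "t \<in> {0..1}"
  then have "0 \<le> (1 - t) * A t / C t"
    using A_pos[OF t] C_pos[OF t] by simp
  then show ?thesis
    using one_minus_S[OF t] by simp
qed

lemma has_real_derivative_S: "t \<in> {0..1} \<Longrightarrow> (S has_real_derivative S' t) (at t)"
proof -
  assume "t \<in> {0..1}"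
  then have C: "c - (a + t)^2 \<noteq> 0"
    using C_pos by (force simp: C_def)
  have "((c - (a + 1) * (a + t)) - t * (a + 1)) * (c - (a + t)^2)
        + t * (c - (a + 1) * (a + t)) * (2 * (a + t))
      = (c + a * (a + 1)) * (c + (a + t)^2) - 2 * (2 * a + 1) * c * (a + t)"
    by algebra
  with C show ?thesis
    unfolding S_def[abs_def] S'_def B_def C_def
    by (auto intro!: derivative_eq_intros simp: power2_eq_square algebra_simps)
qed

lemma continuous_on_S: "continuous_on {0..1} S"
  using has_real_derivative_S by (rule has_real_derivative_imp_continuous_on)

lemma continuous_on_S': "continuous_on {0..1} S'"
  using C_pos unfolding S'_def[abs_def] C_def by (force intro!: continuous_intros)

lemma S'_pos: "t \<in> {0..1} \<Longrightarrow> S' t > 0"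
proof -
  assume t: "t \<in> {0..1}"
  have "(c + a * (a + 1)) * ((c + a * (a + 1)) * (c + (a + t)^2) - 2 * (2 * a + 1) * c * (a + t))
      = ((c + a * (a + 1)) * (a + t) - (2 * a + 1) * c)^2 + c * (c - a^2) * K"
    by (simp add: K_def power2_eq_square algebra_simps)
  also have "\<dots> > 0"
    by (intro add_nonneg_pos mult_pos_pos zero_le_power2)
      (use a_sq_less K_pos zero_le_power2[of a] in linarith)+
  finally show ?thesis
    using c_plus_a_mult_a1_pos C_pos[OF t] by (simp add: S'_def zero_less_mult_iff)
qed

lemma S'_decomp: "t \<in> {0..1} \<Longrightarrow> S' t = (a + 1) * (1 - 2 * S t) / C t + K * D t / C t ^ 2"
proof -
  assume "t \<in> {0..1}"
  then have "C t \<noteq> 0"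
    using C_pos by force
  moreover have "(c + a * (a + 1)) * (c + (a + t)^2) - 2 * (2 * a + 1) * c * (a + t)
      = (a + 1) * (C t - 2 * t * B t) + K * D t"
    unfolding B_def C_def D_def K_def by algebra
  ultimately show ?thesis
    by (simp add: S'_def S_def field_simps power2_eq_square)
qed

text \<open>Writing x = a + t, the Moebius involution x \<mapsto> (P x - (2a+1) c) / ((2a+1) x - P) with
  P = c + a (a+1) swaps a and a + 1 and conjugates s \<mapsto> 1 - s under S; composing it with
  t \<mapsto> 1 - t gives the increasing reparametrisation \<sigma> of [0,1] with S (\<sigma> t) = 1 - S (1 - t).\<close>

definition "\<sigma>_den t = (2 * a + 1) * (a + 1 - t) - (c + a * (a + 1))"
definition "\<sigma> t = ((c + a * (a + 1)) * (a + 1 - t) - (2 * a + 1) * c) / \<sigma>_den t - a"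
definition "\<sigma>' t = (c - a^2) * K / \<sigma>_den t ^ 2"

lemma \<sigma>_den_neg: "t \<in> {0..1} \<Longrightarrow> \<sigma>_den t < 0"
proof -
  assume "t \<in> {0..1}"
  moreover have "\<sigma>_den t = - ((1 - (1 - t)) * (c - a^2) + (1 - t) * K)"
    by (simp add: \<sigma>_den_def K_def power2_eq_square algebra_simps)
  ultimately show ?thesis
    using convex_combination_pos[of "1 - t" "c - a^2" K] a_sq_less K_pos by simp
qed

lemma \<sigma>_0: "\<sigma> 0 = 0"
proof -
  have "(c + a * (a + 1)) * (a + 1 - 0) - (2 * a + 1) * c = a * \<sigma>_den 0"
    unfolding \<sigma>_den_def by algebra
  then show ?thesis
    using \<sigma>_den_neg[of 0] by (simp add: \<sigma>_def)
qed

lemma \<sigma>_1: "\<sigma> 1 = 1"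
proof -
  have "(c + a * (a + 1)) * (a + 1 - 1) - (2 * a + 1) * c = (a + 1) * \<sigma>_den 1"
    unfolding \<sigma>_den_def by algebra
  then show ?thesis
    using \<sigma>_den_neg[of 1] by (simp add: \<sigma>_def)
qed

lemma has_real_derivative_\<sigma>: "t \<in> {0..1} \<Longrightarrow> (\<sigma> has_real_derivative \<sigma>' t) (at t)"
proof -
  assume "t \<in> {0..1}"
  then have den: "\<sigma>_den t \<noteq> 0"
    using \<sigma>_den_neg by force
  have "- (c + a * (a + 1)) * \<sigma>_den t
        + ((c + a * (a + 1)) * (a + 1 - t) - (2 * a + 1) * c) * (2 * a + 1)
      = (c - a^2) * K"
    unfolding \<sigma>_den_def K_def by algebra
  with den show ?thesis
    unfolding \<sigma>_def[abs_def] \<sigma>'_def \<sigma>_den_def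
    by (auto intro!: derivative_eq_intros simp: power2_eq_square algebra_simps)
qed

lemma continuous_on_\<sigma>': "continuous_on {0..1} \<sigma>'"
  using \<sigma>_den_neg unfolding \<sigma>'_def[abs_def] \<sigma>_den_def by (force intro!: continuous_intros)

lemma \<sigma>'_pos: "t \<in> {0..1} \<Longrightarrow> \<sigma>' t > 0"
  using \<sigma>_den_neg[of t] a_sq_less K_pos by (simp add: \<sigma>'_def)

lemma C_\<sigma>: "t \<in> {0..1} \<Longrightarrow> C (\<sigma> t) = C (1 - t) * \<sigma>' t"
proof -
  assume "t \<in> {0..1}"
  then have den: "\<sigma>_den t \<noteq> 0"
    using \<sigma>_den_neg by force
  define p where "p = (c + a * (a + 1)) * (a + 1 - t) - (2 * a + 1) * c"
  have "C (\<sigma> t) = c - (p / \<sigma>_den t)^2"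
    by (simp add: C_def \<sigma>_def p_def)
  also have "\<dots> = (c * \<sigma>_den t ^ 2 - p ^ 2) / \<sigma>_den t ^ 2"
    using den by (simp add: field_simps)
  also have "c * \<sigma>_den t ^ 2 - p ^ 2 = C (1 - t) * ((c - a^2) * K)"
    unfolding p_def \<sigma>_den_def C_def K_def by algebra
  finally show ?thesis
    by (simp add: \<sigma>'_def)
qed

lemma S_\<sigma>: "t \<in> {0..1} \<Longrightarrow> S (\<sigma> t) = 1 - S (1 - t)"
proof -
  assume t: "t \<in> {0..1}"
  then have t': "1 - t \<in> {0..1}"
    by auto
  define p where "p = (c + a * (a + 1)) * (a + 1 - t) - (2 * a + 1) * c"
  define q where "q = \<sigma>_den t"
  have nz: "q \<noteq> 0" "(c - a^2) * K \<noteq> 0" "C (1 - t) \<noteq> 0"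
    using \<sigma>_den_neg[OF t] a_sq_less K_pos C_pos[OF t'] by (auto simp: q_def)
  have "\<sigma> t * B (\<sigma> t) = (p - a * q) * (c * q - (a + 1) * p) / q^2"
    using nz(1) unfolding \<sigma>_def B_def p_def[symmetric] q_def[symmetric]
    by (simp add: field_simps) algebra
  also have "(p - a * q) * (c * q - (a + 1) * p) = t * A (1 - t) * ((c - a^2) * K)"
    unfolding p_def q_def \<sigma>_den_def A_def K_def by algebra
  finally have num: "\<sigma> t * B (\<sigma> t) = t * A (1 - t) * ((c - a^2) * K) / q^2" .
  have den: "C (\<sigma> t) = C (1 - t) * ((c - a^2) * K) / q^2"
    unfolding C_\<sigma>[OF t] \<sigma>'_def q_def by simp
  have "S (\<sigma> t) = t * A (1 - t) / C (1 - t)"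
    unfolding S_def num den using nz by (simp add: field_simps)
  then show ?thesis
    using one_minus_S[OF t'] by simp
qed

definition "G x t = beta_kernel x (S t) * (1 - 2 * S t) / C t"

lemma G_\<sigma>: "t \<in> {0..1} \<Longrightarrow> G x (\<sigma> t) * \<sigma>' t = - G x (1 - t)"
proof -
  assume t: "t \<in> {0..1}"
  then have "C (1 - t) > 0"
    using C_pos by simp
  then show ?thesis
    using \<sigma>'_pos[OF t] by (simp add: G_def S_\<sigma>[OF t] C_\<sigma>[OF t] beta_kernel_reflect field_simps)
qed

lemma beta_kernel_S_integral:
  assumes "x > 0"
  shows "set_integrable lborel {0..1} (\<lambda>t. beta_kernel x (S t) * S' t)"
    and "((\<lambda>t. beta_kernel x (S t) * S' t) has_integral Beta x x) {0..1}"
proof -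
  have "set_integrable lborel {S 0..S 1} (beta_kernel x)"
    using beta_kernel_integrable[OF assms] by (simp add: S_0 S_1)
  note subst = has_integral_substitution_nonneg_deriv[OF this has_real_derivative_S continuous_on_S'
      less_imp_le[OF S'_pos]]
  show "set_integrable lborel {0..1} (\<lambda>t. beta_kernel x (S t) * S' t)"
    using subst(1) by simp
  show "((\<lambda>t. beta_kernel x (S t) * S' t) has_integral Beta x x) {0..1}"
    using subst(2) integral_unique[OF has_integral_beta_kernel[OF assms]] by (simp add: S_0 S_1)
qed

lemma G_integrable:
  assumes "x > 0"
  shows "set_integrable lborel {0..1} (G x)"
proof -
  have C: "continuous_on {0..1} C"
    unfolding C_def[abs_def] by (intro continuous_intros)
  have "continuous_on {0..1} (\<lambda>t. (1 - 2 * S t) / (C t * S' t))"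
    using C_pos S'_pos
    by (intro continuous_intros continuous_on_S C continuous_on_S')
      (metis mult_pos_pos order_less_irrefl)
  then have int: "set_integrable lborel {0..1}
      (\<lambda>t. (1 - 2 * S t) / (C t * S' t) * (beta_kernel x (S t) * S' t))"
    by (rule set_integrable_mult_continuous[OF beta_kernel_S_integral(1)[OF assms]])
  have eq: "(1 - 2 * S t) / (C t * S' t) * (beta_kernel x (S t) * S' t) = G x t"
    if "t \<in> {0..1}" for t
    using C_pos[OF that] S'_pos[OF that] by (simp add: G_def)
  show ?thesis
    by (rule set_integrable_cong[OF refl refl eq, THEN iffD1, OF _ int])
qed

lemma has_integral_G: "x > 0 \<Longrightarrow> (G x has_integral 0) {0..1}"
proof -
  assume "x > 0"
  then have int: "set_integrable lborel {0..1} (G x)"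
    by (rule G_integrable)
  then have "set_integrable lborel {\<sigma> 0..\<sigma> 1} (G x)"
    by (simp only: \<sigma>_0 \<sigma>_1)
  from has_integral_substitution_nonneg_deriv(2)[OF this has_real_derivative_\<sigma>
      continuous_on_\<sigma>' less_imp_le[OF \<sigma>'_pos]]
  have "((\<lambda>t. G x (\<sigma> t) * \<sigma>' t) has_integral integral {0..1} (G x)) {0..1}"
    by (simp only: \<sigma>_0 \<sigma>_1)
  moreover have "((\<lambda>t. G x (\<sigma> t) * \<sigma>' t) has_integral integral {0..1} (G x)) {0..1}
      = ((\<lambda>t. - G x (1 - t)) has_integral integral {0..1} (G x)) {0..1}"
    by (rule has_integral_cong) (rule G_\<sigma>)
  ultimately have "((\<lambda>t. - G x (1 - t)) has_integral integral {0..1} (G x)) {0..1}"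
    by simp
  from integral_unique[OF this]
  have "integral {0..1} (G x) = - integral {0..1} (\<lambda>t. G x (0 + 1 - t))"
    by simp
  then have "integral {0..1} (G x) = 0"
    unfolding integral_reflect_Icc by simp
  then show ?thesis
    using set_borel_integral_eq_integral(1)[OF int] by (metis has_integral_integral)
qed

definition "integrand_real x t =
  A t powr (x - 1) * B t powr (x - 1) / C t powr (2 * x) * D t * t powr (x - 1) * (1 - t) powr (x - 1)"

lemma integrand_real_eq_beta_kernel:
  assumes t: "t \<in> {0..1}"
  shows "integrand_real x t = beta_kernel x (S t) * D t / C t ^ 2"
proof -
  have pos: "A t > 0" "B t > 0" "C t > 0" "0 \<le> t" "0 \<le> 1 - t"
    using A_pos[OF t] B_pos[OF t] C_pos[OF t] t by auto
  have "C t powr (2 * x) = C t powr (x - 1) * C t powr (x - 1) * C t powr 2"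
    by (simp add: powr_add[symmetric])
  also have "C t powr 2 = C t ^ 2"
    using pos(3) by simp
  finally have C: "C t powr (2 * x) = C t powr (x - 1) * C t powr (x - 1) * C t ^ 2" .
  have "beta_kernel x (S t) = (t * B t / C t) powr (x - 1) * ((1 - t) * A t / C t) powr (x - 1)"
    unfolding beta_kernel_def one_minus_S[OF t] by (simp add: S_def)
  also have "\<dots> = t powr (x - 1) * B t powr (x - 1) / C t powr (x - 1) *
      ((1 - t) powr (x - 1) * A t powr (x - 1) / C t powr (x - 1))"
    using pos by (simp only: powr_divide powr_mult mult_nonneg_nonneg less_imp_le)
  finally show ?thesis
    unfolding integrand_real_def C using pos(3) by (simp add: field_simps)
qed

lemma K_integrand_real:
  assumes "t \<in> {0..1}"
  shows "K * integrand_real x t = beta_kernel x (S t) * S' t - (a + 1) * G x t"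
proof -
  have "C t \<noteq> 0"
    using C_pos[OF assms] by simp
  then show ?thesis
    unfolding integrand_real_eq_beta_kernel[OF assms] S'_decomp[OF assms] G_def
    by (simp add: field_simps)
qed

lemma has_integral_integrand_real:
  assumes "x > 0"
  shows "(integrand_real x has_integral Beta x x / K) {0..1}"
proof -
  have eq: "(beta_kernel x (S t) * S' t - (a + 1) * G x t) / K = integrand_real x t"
    if "t \<in> {0..1}" for t
    using K_pos by (simp add: K_integrand_real[OF that, symmetric])
  have "((\<lambda>t. (beta_kernel x (S t) * S' t - (a + 1) * G x t) / K) has_integral
      (Beta x x - (a + 1) * 0) / K) {0..1}"
    using beta_kernel_S_integral(2)[OF assms] has_integral_G[OF assms]
    by (intro has_integral_divide has_integral_diff has_integral_mult_right)
  then have "((\<lambda>t. (beta_kernel x (S t) * S' t - (a + 1) * G x t) / K) has_integral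
      Beta x x / K) {0..1}"
    by simp
  then show ?thesis
    by (rule has_integral_eq[rotated]) (rule eq)
qed

definition "integrand \<beta> t =
  complex_of_real (A t) powr (\<beta> - 1) * complex_of_real (B t) powr (\<beta> - 1) /
  complex_of_real (C t) powr (2 * \<beta>) * complex_of_real (D t) *
  complex_of_real t powr (\<beta> - 1) * complex_of_real (1 - t) powr (\<beta> - 1)"

lemma norm_integrand: "t \<in> {0..1} \<Longrightarrow> norm (integrand \<beta> t) = integrand_real (Re \<beta>) t"
  using A_pos[of t] B_pos[of t] C_pos[of t] D_pos[of t]
  by (simp add: integrand_def integrand_real_def norm_mult norm_divide norm_powr_real_powr
      del: of_real_diff)

lemma integrand_of_real: "t \<in> {0..1} \<Longrightarrow> integrand (of_real x) t = of_real (integrand_real x t)"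
proof -
  assume t: "t \<in> {0..1}"
  have pow: "complex_of_real X powr (of_real x - 1) = of_real (X powr (x - 1))"
    "complex_of_real X powr (2 * of_real x) = of_real (X powr (2 * x))" if "X \<ge> 0" for X
    using powr_of_real[OF that, of "x - 1"] powr_of_real[OF that, of "2 * x"] by simp_all
  show ?thesis
    using A_pos[OF t] B_pos[OF t] C_pos[OF t] D_pos[of t] t
    by (simp add: integrand_def integrand_real_def pow del: of_real_diff)
qed

lemma integrand_real_antimono:
  assumes "t \<in> {0..1}" "x0 \<le> x"
  shows "integrand_real x t \<le> integrand_real x0 t"
  unfolding integrand_real_eq_beta_kernel[OF assms(1)]
  using beta_kernel_antimono[OF S_nonneg S_le_1 assms(2)] C_pos D_pos[of t] assms(1)
  by (simp add: divide_right_mono mult_right_mono)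

lemma S_bounds_open:
  assumes "t \<in> {0<..<1}"
  shows "0 < S t" "S t < 1"
proof -
  have t: "t \<in> {0..1}"
    using assms by auto
  show "0 < S t"
    using assms B_pos[OF t] C_pos[OF t] by (simp add: S_def)
  have "0 < (1 - t) * A t / C t"
    using assms A_pos[OF t] C_pos[OF t] by simp
  then show "S t < 1"
    using one_minus_S[OF t] by simp
qed

lemma continuous_on_exp_factors:
  shows "continuous_on {0<..<1} (\<lambda>t. complex_of_real (D t / (A t * B t * t * (1 - t))))"
    and "continuous_on {0<..<1} (\<lambda>t. complex_of_real (ln (S t * (1 - S t))))"
proof -
  have "continuous_on {0<..<1} A" "continuous_on {0<..<1} B" "continuous_on {0<..<1} D"
    unfolding A_def[abs_def] B_def[abs_def] D_def[abs_def] by (intro continuous_intros)+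
  moreover have "A t * B t * t * (1 - t) \<noteq> 0" if "t \<in> {0<..<1}" for t
    using that A_pos[of t] B_pos[of t] by auto
  ultimately show "continuous_on {0<..<1} (\<lambda>t. complex_of_real (D t / (A t * B t * t * (1 - t))))"
    by (intro continuous_intros) auto
  have "continuous_on {0<..<1} S"
    by (rule continuous_on_subset[OF continuous_on_S]) auto
  moreover have "S t * (1 - S t) \<noteq> 0" if "t \<in> {0<..<1}" for t
    using S_bounds_open[OF that] by simp
  ultimately show "continuous_on {0<..<1} (\<lambda>t. complex_of_real (ln (S t * (1 - S t))))"
    by (intro continuous_intros) auto
qed

lemma integrand_eq_exp:
  assumes "t \<in> {0<..<1}"
  shows "integrand \<beta> t =
    of_real (D t / (A t * B t * t * (1 - t))) * exp (\<beta> * of_real (ln (S t * (1 - S t))))"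
proof -
  have t: "t \<in> {0..1}"
    using assms by auto
  have pos: "A t > 0" "B t > 0" "C t > 0" "t > 0" "1 - t > 0"
    using A_pos[OF t] B_pos[OF t] C_pos[OF t] assms by auto
  define L where "L = ln (A t) + ln (B t) + ln t + ln (1 - t)"
  have pow: "complex_of_real X powr w = exp (w * of_real (ln X))" if "X > 0" for X w
    using that by (simp add: powr_def Ln_of_real)
  have "1 - S t = (1 - t) * A t / C t"
    by (rule one_minus_S[OF t])
  then have "S t * (1 - S t) = A t * B t * t * (1 - t) / C t ^ 2"
    by (simp add: S_def power2_eq_square)
  then have ln_S: "ln (S t * (1 - S t)) = L - 2 * ln (C t)"
    unfolding L_def using pos by (simp add: ln_mult ln_div ln_realpow)
  have "exp L = A t * B t * t * (1 - t)"
    unfolding L_def using pos by (simp add: exp_add)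
  then have "D t / (A t * B t * t * (1 - t)) = D t * exp (- L)"
    by (simp add: exp_minus divide_inverse)
  then have "of_real (D t / (A t * B t * t * (1 - t))) * exp (\<beta> * of_real (ln (S t * (1 - S t))))
      = of_real (D t) * (exp (- of_real L) * exp (\<beta> * (of_real L - 2 * of_real (ln (C t)))))"
    unfolding ln_S by (simp add: exp_of_real[of "- L", symmetric])
  also have "\<dots> = of_real (D t) * exp ((\<beta> - 1) * of_real L - 2 * \<beta> * of_real (ln (C t)))"
    unfolding mult_exp_exp by (rule arg_cong[where f = "\<lambda>w. of_real (D t) * exp w"]) algebra
  also have "\<dots> = integrand \<beta> t"
    using pos by (simp add: integrand_def pow L_def exp_add[symmetric] exp_diff[symmetric]
        algebra_simps del: of_real_diff)
  finally show ?thesis ..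
qed

lemma continuous_on_integrand: "continuous_on {0<..<1} (integrand \<beta>)"
proof (rule continuous_on_eq)
  show "continuous_on {0<..<1} (\<lambda>t. of_real (D t / (A t * B t * t * (1 - t))) *
      exp (\<beta> * of_real (ln (S t * (1 - S t)))))"
    using continuous_on_exp_factors
    by (intro continuous_on_mult continuous_on_exp continuous_on_const) auto
qed (simp add: integrand_eq_exp)

lemma holomorphic_integral_integrand_compact:
  assumes "0 < u" "v < 1"
  shows "(\<lambda>\<beta>. integral {u..v} (integrand \<beta>)) holomorphic_on UNIV"
proof -
  have sub: "{u..v} \<subseteq> {0<..<1}"
    using assms by auto
  have "(\<lambda>\<beta>. integral {u..v} (\<lambda>t. of_real (D t / (A t * B t * t * (1 - t))) *
      exp (\<beta> * of_real (ln (S t * (1 - S t)))))) holomorphic_on UNIV"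
    using continuous_on_exp_factors
    by (intro holomorphic_on_integral_mult_exp continuous_on_subset[OF _ sub])
  moreover have "integral {u..v} (integrand \<beta>) =
      integral {u..v} (\<lambda>t. of_real (D t / (A t * B t * t * (1 - t))) *
        exp (\<beta> * of_real (ln (S t * (1 - S t)))))" for \<beta>
    using sub integrand_eq_exp by (intro integral_cong) auto
  ultimately show ?thesis
    by simp
qed

lemma integrand_integrable:
  assumes "Re \<beta> > 0"
  shows "integrand \<beta> integrable_on {0..1}"
proof -
  have "integrand_real (Re \<beta>) integrable_on {0<..<1}"
    using has_integral_integrand_real[OF assms] integrable_on_Icc_iff_Ioo by blast
  then have "integrand \<beta> absolutely_integrable_on {0<..<1}"
    by (intro measurable_bounded_by_integrable_imp_absolutely_integrable
        continuous_imp_measurable_on_sets_lebesgue[OF continuous_on_integrand])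
       (auto simp: norm_integrand)
  then show ?thesis
    using set_lebesgue_integral_eq_integral(1) integrable_on_Icc_iff_Ioo by blast
qed

lemma holomorphic_integral_integrand:
  "(\<lambda>\<beta>. integral {0..1} (integrand \<beta>)) holomorphic_on {\<beta>. Re \<beta> > 0}"
proof (rule holomorphic_on_integral_dominated)
  fix z assume "z \<in> {\<beta>. Re \<beta> > 0}"
  then have r: "Re z / 2 > 0"
    by simp
  have Re_ge: "Re z / 2 \<le> Re w" if "w \<in> cball z (Re z / 2)" for w
    using that abs_Re_le_cmod[of "z - w"] by (simp add: dist_norm)
  have "cball z (Re z / 2) \<subseteq> {\<beta>. Re \<beta> > 0}"
    using Re_ge r by fastforce
  moreover have "norm (integrand w t) \<le> integrand_real (Re z / 2) t"
    if "w \<in> cball z (Re z / 2)" "t \<in> {0..1}" for w t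
    unfolding norm_integrand[OF that(2)]
    by (rule integrand_real_antimono[OF that(2) Re_ge[OF that(1)]])
  ultimately show "\<exists>r>0. cball z r \<subseteq> {\<beta>. Re \<beta> > 0} \<and>
      (\<exists>g. g integrable_on {0..1} \<and> (\<forall>w\<in>cball z r. \<forall>t\<in>{0..1}. norm (integrand w t) \<le> g t))"
    using r has_integral_integrand_real[OF r] by blast
qed (auto intro: integrand_integrable holomorphic_on_subset[OF holomorphic_integral_integrand_compact])

lemma Beta_eq_integral:
  assumes "Re \<beta> > 0"
  shows "Beta \<beta> \<beta> = of_real K * integral {0..1} (integrand \<beta>)"
proof -
  define H where "H = {z :: complex. Re z > 0}"
  have "Beta \<beta> \<beta> - of_real K * integral {0..1} (integrand \<beta>) = 0"
  proof (rule analytic_continuation[where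
        f = "\<lambda>z. Beta z z - of_real K * integral {0..1} (integrand z)" and S = H and U = "complex_of_real ` {0<..}" and \<xi> = 1])
    have "z \<notin> \<int>\<^sub>\<le>\<^sub>0" if "z \<in> H" for z
      using that by (auto simp: H_def elim!: nonpos_Ints_cases)
    then show "(\<lambda>z. Beta z z - of_real K * integral {0..1} (integrand z)) holomorphic_on H"
      using holomorphic_integral_integrand unfolding H_def
      by (intro holomorphic_intros) auto
    show "open H" "connected H"
      unfolding H_def by (auto intro: open_halfspace_Re_gt convex_connected convex_halfspace_Re_gt)
    have "1 islimpt {0<..<1::real}"
      by (rule islimpt_greaterThanLessThan2) simp
    then have "complex_of_real 1 islimpt of_real ` {0<..<1}"
      by (rule islimpt_isCont_image) (auto simp: eventually_at_filter)
    then show "1 islimpt complex_of_real ` {0<..}"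
      by (auto intro: islimpt_subset)
    show "Beta w w - of_real K * integral {0..1} (integrand w) = 0"
      if w: "w \<in> complex_of_real ` {0<..}" for w
    proof -
      obtain x :: real where x: "x > 0" "w = of_real x"
        using w by auto
      have "integral {0..1} (integrand w) =
          integral {0..1} (\<lambda>t. complex_of_real (integrand_real x t))"
        unfolding x(2) by (rule integral_cong) (simp add: integrand_of_real)
      also have "\<dots> = of_real (Beta x x / K)"
        using has_integral_of_real[OF has_integral_integrand_real[OF x(1)]] by (rule integral_unique)
      finally show ?thesis
        using K_pos by (simp add: x(2) Beta_complex_of_real)
    qed
  qed (use assms in \<open>auto simp: H_def\<close>)
  then show ?thesis
    by simp
qed

end

theorem mainTheorem10:
  fixes \<beta> :: complex and a c :: real
  assumes "Re \<beta> > 0"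
    and "\<And>t. t \<in> {0..1} \<Longrightarrow> c - a * (a + t) > 0"
    and "\<And>t. t \<in> {0..1} \<Longrightarrow> c - (a + 1) * (a + t) > 0"
    and "\<And>t. t \<in> {0..1} \<Longrightarrow> c - (a + t)^2 > 0"
  shows "Gamma \<beta> * Gamma \<beta> / Gamma (2 * \<beta>) =
    complex_of_real (c - (a + 1)^2) *
    integral {0..1} (\<lambda>t::real.
       (complex_of_real (c - a * (a + t)) powr (\<beta> - 1)) *
       (complex_of_real (c - (a + 1) * (a + t)) powr (\<beta> - 1)) /
       (complex_of_real (c - (a + t)^2) powr (2 * \<beta>)) *
       complex_of_real (c - (a - t) * (a + t)) *
       (complex_of_real t powr (\<beta> - 1)) *
       (complex_of_real (1 - t) powr (\<beta> - 1)))"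
proof -
  \<comment> \<open>Positivity of c - a(a+t) and c - (a+1)(a+t) on [0,1] already follows from that of
    c - (a+t)^2 at t = 0 and t = 1.\<close>
  interpret quadratic_beta a c
    by standard (use assms(4)[of 0] assms(4)[of 1] in simp_all)
  have "Gamma \<beta> * Gamma \<beta> / Gamma (2 * \<beta>) = Beta \<beta> \<beta>"
    by (simp only: Beta_def mult_2)
  also have "\<dots> = of_real K * integral {0..1} (integrand \<beta>)"
    by (rule Beta_eq_integral[OF assms(1)])
  finally show ?thesis
    unfolding K_def integrand_def A_def B_def C_def D_def .
qed

end
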